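(* Let $m\le k\le n$ be positive integers, $\epsilon\in(0,1)$ with $k\ge\frac{4m}{\epsilon}+\frac{12}{\epsilon^2}\log(\frac1\epsilon)$, $\mathbf a_1,\dots,\mathbf a_n\in\mathbb R^m$, and $w^*=\max\{[\det(\sum_{i\in S}\mathbf a_i\mathbf a_i^\top)]^{1/m}: S\subseteq[n],|S|=k\}$. Let $(\hat{\mathbf x},\hat w)$ be an optimal solution of the convex relaxation $\max\{w: w\le[\det(\sum_{i\in[n]}x_i\mathbf a_i\mathbf a_i^\top)]^{1/m},\ \sum_ix_i=k,\ \mathbf x\in[0,1]^n\}$. Consider the randomized algorithm: repeatedly sample a set $\mathcal S\subseteq[n]$ by including each $i\in[n]$ independently with probability $\frac{\hat x_i}{1+\epsilon}$, until $|\mathcal S|\le k$; then, while $|\mathcal S|<k$, add to $\mathcal S$ an element $j^*\in\arg\max_{j\in[n]\setminus\mathcal S}[\det(\sum_{i\in\mathcal S}\mathbf a_i\mathbf a_i^\top+\mathbf a_j\mathbf a_j^\top)]^{1/m}$; output $\mathcal S$. Then the output (a set of size $k$) satisfies $$\Big\{\mathbb E\Big[\det\Big(\sum_{i\in\mathcal S}\mathbf a_i\mathbf a_i^\top\Big)\Big]\Big\}^{1/m}\ge(1-\epsilon)\,w^*,$$ i.e. the algorithm is a $(1-\epsilon)$-approximation for the $D$-optimal design problem.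
   Context: $[n]=\{1,\dots,n\}$; $\log$ is the natural logarithm. This is the $D$-optimal design problem without repetitions. *)

theory Defs
  imports "HOL-Analysis.Analysis" "HOL-Probability.Probability"
begin

definition outer :: "real^'m \<Rightarrow> real^'m^'m" where
  "outer v = (\<chi> r c. v $ r * v $ c)"

definition gram :: "(nat \<Rightarrow> real^'m) \<Rightarrow> nat set \<Rightarrow> real^'m^'m" where
  "gram a S = (\<Sum>i\<in>S. outer (a i))"

definition dobj :: "(nat \<Rightarrow> real^'m) \<Rightarrow> nat set \<Rightarrow> real" where
  "dobj a S = det (gram a S) powr (1 / real CARD('m))"

definition wstar :: "(nat \<Rightarrow> real^'m) \<Rightarrow> nat \<Rightarrow> nat \<Rightarrow> real" where
  "wstar a n k = Max {dobj a S | S. S \<subseteq> {1..n} \<and> card S = k}"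

definition relax_feasible :: "(nat \<Rightarrow> real^'m) \<Rightarrow> nat \<Rightarrow> nat \<Rightarrow> (nat \<Rightarrow> real) \<Rightarrow> real \<Rightarrow> bool" where
  "relax_feasible a n k x w \<longleftrightarrow>
     w \<le> det (\<Sum>i\<in>{1..n}. x i *\<^sub>R outer (a i)) powr (1 / real CARD('m)) \<and>
     (\<Sum>i\<in>{1..n}. x i) = real k \<and> (\<forall>i\<in>{1..n}. 0 \<le> x i \<and> x i \<le> 1)"

definition relax_optimal :: "(nat \<Rightarrow> real^'m) \<Rightarrow> nat \<Rightarrow> nat \<Rightarrow> (nat \<Rightarrow> real) \<Rightarrow> real \<Rightarrow> bool" where
  "relax_optimal a n k x w \<longleftrightarrow> relax_feasible a n k x w \<and>
     (\<forall>x' w'. relax_feasible a n k x' w' \<longrightarrow> w' \<le> w)"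

definition indep_sample :: "nat \<Rightarrow> (nat \<Rightarrow> real) \<Rightarrow> nat set pmf" where
  "indep_sample n p = map_pmf (\<lambda>f. {i. f i}) (Pi_pmf {1..n} False (\<lambda>i. bernoulli_pmf (p i)))"

text \<open>Repeat sampling until |S| <= k: the resulting distribution is the
  conditional distribution given |S| <= k.\<close>
definition rejection_sample :: "nat \<Rightarrow> nat \<Rightarrow> (nat \<Rightarrow> real) \<Rightarrow> nat set pmf" where
  "rejection_sample n k p = cond_pmf (indep_sample n p) {S. card S \<le> k}"

text \<open>Valid greedy selection rule (arbitrary tie-breaking):
  for |T| < k, returns j* in argmax_{j in [n]\T} dobj (T + j).\<close>
definition greedy_rule :: "(nat \<Rightarrow> real^'m) \<Rightarrow> nat \<Rightarrow> nat \<Rightarrow> (nat set \<Rightarrow> nat) \<Rightarrow> bool" where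
  "greedy_rule a n k sel \<longleftrightarrow>
     (\<forall>T. T \<subseteq> {1..n} \<and> card T < k \<longrightarrow>
        sel T \<in> {1..n} - T \<and>
        (\<forall>j\<in>{1..n} - T. dobj a (insert j T) \<le> dobj a (insert (sel T) T)))"

definition greedy_complete :: "(nat set \<Rightarrow> nat) \<Rightarrow> nat \<Rightarrow> nat set \<Rightarrow> nat set" where
  "greedy_complete sel k S = ((\<lambda>T. insert (sel T) T) ^^ (k - card S)) S"

definition algorithm_output ::
  "nat \<Rightarrow> nat \<Rightarrow> real \<Rightarrow> (nat \<Rightarrow> real) \<Rightarrow> (nat set \<Rightarrow> nat) \<Rightarrow> nat set pmf" where
  "algorithm_output n k \<epsilon> x sel =
     map_pmf (greedy_complete sel k) (rejection_sample n k (\<lambda>i. x i / (1 + \<epsilon>)))"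

end

theory Submission
  imports Defs
begin

text \<open>By Cauchy--Binet, \<open>det (\<Sum>i\<in>I. x\<^sub>i a\<^sub>i a\<^sub>i\<^sup>T)\<close> is the sum over the \<open>m\<close>-subsets \<open>T \<subseteq> I\<close> of
  \<open>(\<Prod>i\<in>T. x\<^sub>i) det (\<Sum>i\<in>T. a\<^sub>i a\<^sub>i\<^sup>T)\<close>, a polynomial in \<open>x\<close> with nonnegative coefficients. Hence
  \<open>det (\<Sum>i\<in>S. a\<^sub>i a\<^sub>i\<^sup>T)\<close> is monotone in \<open>S\<close>, so the greedy completion never decreases it, and
  under independent sampling with probabilities \<open>p\<close> its expectation is \<open>det (\<Sum>i. p\<^sub>i a\<^sub>i a\<^sub>i\<^sup>T)\<close>.
  Conditioning on \<open>|S| \<le> k\<close> is handled term by term: for an \<open>m\<close>-set \<open>T\<close> the indicator of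
  \<open>T \<subseteq> S \<and> |S| \<le> k\<close> dominates \<open>[T \<subseteq> S] (1 - c\<^bsup>|S - T| - (k - m)\<^esup>)\<close> with \<open>c = 1 + \<epsilon>\<close>, whose
  expectation factorizes, and the lower bound on \<open>k\<close> makes it at least \<open>(1 - \<epsilon>\<^sup>2) \<Prod>i\<in>T. p\<^sub>i\<close>.
  Taking \<open>p = xh / (1 + \<epsilon>)\<close> the expected determinant is at least
  \<open>(1 - \<epsilon>\<^sup>2) (1 + \<epsilon>)\<^bsup>-m\<^esup> det (\<Sum>i. xh\<^sub>i a\<^sub>i a\<^sub>i\<^sup>T) \<ge> ((1 - \<epsilon>) wh)\<^sup>m\<close>, while \<open>w\<^sup>* \<le> wh\<close>.\<close>

section \<open>Cauchy--Binet expansion of information matrices\<close>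

text \<open>In the Leibniz expansion of \<open>det (\<Sum>i\<in>I. x i *\<^sub>R outer (a i))\<close> let row \<open>r\<close> pick the summand
  indexed by \<open>g r\<close>; after factoring out \<open>\<Prod>r. x (g r)\<close>, what remains is this term.\<close>

definition cauchy_binet_term :: "(nat \<Rightarrow> real^'m) \<Rightarrow> ('m \<Rightarrow> nat) \<Rightarrow> real" where
  "cauchy_binet_term a g = (\<Prod>r\<in>UNIV. a (g r) $ r) * det (\<chi> r. a (g r))"

definition cauchy_binet_coeff :: "(nat \<Rightarrow> real^'m) \<Rightarrow> nat set \<Rightarrow> real" where
  "cauchy_binet_coeff a T = (\<Sum>g\<in>{g::'m \<Rightarrow> nat. range g = T}. cauchy_binet_term a g)"

lemma cauchy_binet_term_not_inj:
  fixes g :: "'m::finite \<Rightarrow> nat"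
  assumes "\<not> inj g"
  shows "cauchy_binet_term a g = 0"
proof -
  obtain i j where ij: "i \<noteq> j" "g i = g j" using assms unfolding inj_def by blast
  have "det (\<chi> r. a (g r)) = 0"
    by (rule det_identical_rows[OF ij(1)]) (simp add: row_def ij(2))
  thus ?thesis by (simp add: cauchy_binet_term_def)
qed

lemma cauchy_binet_coeff_eq_0:
  assumes "card T \<noteq> CARD('m)"
  shows "cauchy_binet_coeff (a :: nat \<Rightarrow> real^'m::finite) T = 0"
proof -
  have "\<not> inj g" if "range g = T" for g :: "'m \<Rightarrow> nat"
    using assms that card_image[of g UNIV] by auto
  thus ?thesis by (simp add: cauchy_binet_coeff_def cauchy_binet_term_not_inj)
qed

lemma det_weighted_gram_expand:
  fixes a :: "nat \<Rightarrow> real^'m::finite"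
  assumes "finite I"
  shows "det (\<Sum>i\<in>I. x i *\<^sub>R outer (a i)) =
     (\<Sum>g\<in>UNIV \<rightarrow>\<^sub>E I. (\<Prod>r\<in>UNIV. x (g r)) * cauchy_binet_term a g)"
proof -
  have entry: "(\<Sum>i\<in>I. x i *\<^sub>R outer (a i)) $ r $ c = (\<Sum>i\<in>I. x i * a i $ r * a i $ c)" for r c
    by (simp add: outer_def mult.assoc)
  have "det (\<Sum>i\<in>I. x i *\<^sub>R outer (a i)) =
     (\<Sum>p | p permutes (UNIV::'m set). of_int (sign p) *
        (\<Sum>g\<in>UNIV \<rightarrow>\<^sub>E I. \<Prod>r\<in>UNIV. x (g r) * a (g r) $ r * a (g r) $ p r))"
    unfolding det_def entry by (simp add: prod_sum_PiE assms)
  also have "\<dots> = (\<Sum>g\<in>UNIV \<rightarrow>\<^sub>E I. \<Sum>p | p permutes (UNIV::'m set).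
        ((\<Prod>r\<in>UNIV. x (g r)) * (\<Prod>r\<in>UNIV. a (g r) $ r)) * (of_int (sign p) * (\<Prod>r\<in>UNIV. a (g r) $ p r)))"
    by (subst sum.swap) (simp add: sum_distrib_left prod.distrib mult_ac)
  also have "\<dots> = (\<Sum>g\<in>UNIV \<rightarrow>\<^sub>E I. (\<Prod>r\<in>UNIV. x (g r)) * cauchy_binet_term a g)"
    by (simp add: cauchy_binet_term_def det_def sum_distrib_left[symmetric] mult.assoc)
  finally show ?thesis .
qed

lemma det_weighted_gram_coeff:
  fixes a :: "nat \<Rightarrow> real^'m::finite"
  assumes "finite I"
  shows "det (\<Sum>i\<in>I. x i *\<^sub>R outer (a i)) =
     (\<Sum>T | T \<subseteq> I \<and> card T = CARD('m). (\<Prod>i\<in>T. x i) * cauchy_binet_coeff a T)"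
proof -
  let ?F = "UNIV \<rightarrow>\<^sub>E I :: ('m \<Rightarrow> nat) set"
  have by_range: "(\<Prod>r\<in>UNIV. x (g r)) * cauchy_binet_term a g
      = (\<Prod>i\<in>range g. x i) * cauchy_binet_term a g" for g :: "'m \<Rightarrow> nat"
    by (cases "inj g") (simp_all add: prod.reindex cauchy_binet_term_not_inj)
  have "det (\<Sum>i\<in>I. x i *\<^sub>R outer (a i)) = (\<Sum>g\<in>?F. (\<Prod>i\<in>range g. x i) * cauchy_binet_term a g)"
    unfolding det_weighted_gram_expand[OF assms] by_range ..
  also have "\<dots> = (\<Sum>T\<in>Pow I. \<Sum>g | g \<in> ?F \<and> range g = T. (\<Prod>i\<in>range g. x i) * cauchy_binet_term a g)"
    by (rule sum.group[symmetric]) (use assms in \<open>auto simp: finite_PiE\<close>)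
  also have "\<dots> = (\<Sum>T\<in>Pow I. (\<Prod>i\<in>T. x i) * cauchy_binet_coeff a T)"
  proof (rule sum.cong[OF refl])
    fix T assume "T \<in> Pow I"
    hence "{g. g \<in> ?F \<and> range g = T} = {g. range g = T}" by auto
    thus "(\<Sum>g | g \<in> ?F \<and> range g = T. (\<Prod>i\<in>range g. x i) * cauchy_binet_term a g)
        = (\<Prod>i\<in>T. x i) * cauchy_binet_coeff a T"
      by (simp add: cauchy_binet_coeff_def sum_distrib_left)
  qed
  also have "\<dots> = (\<Sum>T | T \<subseteq> I \<and> card T = CARD('m). (\<Prod>i\<in>T. x i) * cauchy_binet_coeff a T)"
    by (rule sum.mono_neutral_right) (use assms cauchy_binet_coeff_eq_0 in auto)
  finally show ?thesis .
qed

lemma det_gram_eq_square: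
  fixes a :: "nat \<Rightarrow> real^'m::finite"
  assumes "finite T" "card T = CARD('m)"
  obtains B :: "real^'m^'m" where "det (gram a T) = det B ^ 2"
proof -
  obtain g :: "'m \<Rightarrow> nat" where g: "bij_betw g UNIV T"
    using finite_same_card_bij[of "UNIV::'m set" T] assms by auto
  define B where "B = (\<chi> r. a (g r))"
  have "gram a T = (\<Sum>r\<in>UNIV. outer (a (g r)))"
    unfolding gram_def using sum.reindex_bij_betw[OF g, of "\<lambda>i. outer (a i)"] by simp
  also have "\<dots> = transpose B ** B"
    by (simp add: vec_eq_iff outer_def sum_component matrix_matrix_mult_def transpose_def B_def)
  finally have "det (gram a T) = det B ^ 2" by (simp add: det_mul power2_eq_square)
  thus ?thesis by (rule that)
qed

lemma cauchy_binet_coeff_eq_det_gram: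
  fixes a :: "nat \<Rightarrow> real^'m::finite"
  assumes "finite T" "card T = CARD('m)"
  shows "cauchy_binet_coeff a T = det (gram a T)"
proof -
  have "{T'. T' \<subseteq> T \<and> card T' = CARD('m)} = {T}"
    using assms card_subset_eq[of T] by auto
  thus ?thesis using det_weighted_gram_coeff[OF assms(1), of "\<lambda>_. 1" a] by (simp add: gram_def)
qed

theorem det_weighted_gram_cauchy_binet:
  fixes a :: "nat \<Rightarrow> real^'m::finite"
  assumes "finite I"
  shows "det (\<Sum>i\<in>I. x i *\<^sub>R outer (a i)) =
     (\<Sum>T | T \<subseteq> I \<and> card T = CARD('m). (\<Prod>i\<in>T. x i) * det (gram a T))"
  unfolding det_weighted_gram_coeff[OF assms]
  by (rule sum.cong) (auto intro: cauchy_binet_coeff_eq_det_gram finite_subset[OF _ assms])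

lemma det_gram_cauchy_binet:
  fixes a :: "nat \<Rightarrow> real^'m::finite"
  assumes "finite S"
  shows "det (gram a S) = (\<Sum>T | T \<subseteq> S \<and> card T = CARD('m). det (gram a T))"
  using det_weighted_gram_cauchy_binet[OF assms, of "\<lambda>_. 1" a] by (simp add: gram_def)

lemma det_gram_nonneg:
  fixes a :: "nat \<Rightarrow> real^'m::finite"
  assumes "finite S"
  shows "0 \<le> det (gram a S)"
proof -
  have "0 \<le> det (gram a T)" if "T \<subseteq> S" "card T = CARD('m)" for T
    using det_gram_eq_square[OF finite_subset[OF that(1) assms] that(2)] by (metis zero_le_power2)
  thus ?thesis unfolding det_gram_cauchy_binet[OF assms] by (auto intro: sum_nonneg)
qed

lemma det_gram_mono:
  fixes a :: "nat \<Rightarrow> real^'m::finite"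
  assumes "S \<subseteq> S'" "finite S'"
  shows "det (gram a S) \<le> det (gram a S')"
  unfolding det_gram_cauchy_binet[OF finite_subset[OF assms]] det_gram_cauchy_binet[OF assms(2)]
  by (rule sum_mono2) (use assms in \<open>auto intro: det_gram_nonneg finite_subset\<close>)

lemma det_weighted_gram_nonneg:
  fixes a :: "nat \<Rightarrow> real^'m::finite"
  assumes "finite I" "\<And>i. i \<in> I \<Longrightarrow> 0 \<le> x i"
  shows "0 \<le> det (\<Sum>i\<in>I. x i *\<^sub>R outer (a i))"
  unfolding det_weighted_gram_cauchy_binet[OF assms(1)]
  by (intro sum_nonneg mult_nonneg_nonneg prod_nonneg det_gram_nonneg)
     (use assms in \<open>auto intro: finite_subset\<close>)

lemma det_weighted_gram_divide:
  fixes a :: "nat \<Rightarrow> real^'m::finite"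
  assumes "finite I"
  shows "det (\<Sum>i\<in>I. (x i / c) *\<^sub>R outer (a i)) = det (\<Sum>i\<in>I. x i *\<^sub>R outer (a i)) / c ^ CARD('m)"
  unfolding det_weighted_gram_cauchy_binet[OF assms] sum_divide_distrib
  by (rule sum.cong) (auto simp: prod_dividef)

section \<open>Numerical estimates\<close>

lemma ln_one_plus_ge_pade:
  fixes e :: real
  assumes "0 \<le> e"
  shows "2 * e / (2 + e) \<le> ln (1 + e)"
proof -
  let ?f = "\<lambda>x::real. ln (1 + x) - 2 * x / (2 + x)"
  have "?f 0 \<le> ?f e"
  proof (rule DERIV_nonneg_imp_nondecreasing[OF assms])
    fix x :: real assume "0 \<le> x" "x \<le> e"
    hence "DERIV ?f x :> 1 / (1 + x) - 4 / (2 + x)^2"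
      by (auto intro!: derivative_eq_intros simp: power2_eq_square field_simps)
    moreover have "4 / (2 + x)^2 \<le> 1 / (1 + x)"
      using \<open>0 \<le> x\<close> by (simp add: divide_simps power2_eq_square) (simp add: algebra_simps)
    ultimately show "\<exists>y. DERIV ?f x :> y \<and> 0 \<le> y" by force
  qed
  thus ?thesis by simp
qed

lemma ln_one_plus_bounds:
  fixes e :: real
  assumes "0 < e" "e < 1"
  shows "2 / 3 \<le> ln (1 + e) / e" and "e / (1 + e) \<le> (1 - e / 4) * ln (1 + e)"
proof -
  have pade: "2 * e / (2 + e) \<le> ln (1 + e)" using ln_one_plus_ge_pade assms by simp
  have "2 * e / 3 \<le> 2 * e / (2 + e)" using assms by (intro divide_left_mono) auto
  hence "2 * e / 3 \<le> ln (1 + e)" using pade by linarith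
  thus "2 / 3 \<le> ln (1 + e) / e" using assms by (simp add: field_simps)
  have "e / (1 + e) \<le> (1 - e / 4) * (2 * e / (2 + e))"
    using assms by (simp add: field_simps)
  also have "\<dots> \<le> (1 - e / 4) * ln (1 + e)" using pade assms by (intro mult_left_mono) auto
  finally show "e / (1 + e) \<le> (1 - e / 4) * ln (1 + e)" .
qed

lemma exp_div_one_plus_power_le_sq:
  fixes e :: real and k m :: nat
  assumes e: "0 < e" "e < 1" and "m \<le> k"
    and k_large: "real k \<ge> 4 * real m / e + 12 / e^2 * ln (1 / e)"
  shows "exp (e * k / (1 + e)) / (1 + e) ^ (k - m) \<le> e^2"
proof -
  define L where "L = ln (1 / e)"
  have "0 \<le> L" using e by (simp add: L_def)
  have "real m + 3 * L / e \<le> e / 4 * real k"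
  proof -
    have "e / 4 * (4 * real m / e + 12 / e^2 * L) = real m + 3 * L / e"
      using e by (simp add: field_simps power2_eq_square)
    moreover have "e / 4 * (4 * real m / e + 12 / e^2 * L) \<le> e / 4 * real k"
      using k_large e by (intro mult_left_mono) (auto simp: L_def)
    ultimately show ?thesis by simp
  qed
  hence "real k * (1 - e / 4) + 3 * L / e \<le> real (k - m)"
    using \<open>m \<le> k\<close> by (simp add: of_nat_diff field_simps)
  hence "(real k * (1 - e / 4) + 3 * L / e) * ln (1 + e) \<le> real (k - m) * ln (1 + e)"
    using e by (intro mult_right_mono) auto
  moreover have "(real k * (1 - e / 4) + 3 * L / e) * ln (1 + e)
      = real k * ((1 - e / 4) * ln (1 + e)) + 3 * L * (ln (1 + e) / e)"
    using e by (simp add: field_simps)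
  moreover have "real k * (e / (1 + e)) + 3 * L * (2 / 3)
      \<le> real k * ((1 - e / 4) * ln (1 + e)) + 3 * L * (ln (1 + e) / e)"
    using ln_one_plus_bounds[OF e] \<open>0 \<le> L\<close> by (intro add_mono mult_left_mono) auto
  moreover have "ln e = - L" using e by (simp add: L_def ln_div)
  moreover have "e * k / (1 + e) = real k * (e / (1 + e))" by simp
  ultimately have exponent: "e * k / (1 + e) - real (k - m) * ln (1 + e) \<le> 2 * ln e"
    by linarith
  have "exp (e * k / (1 + e)) / (1 + e) ^ (k - m) = exp (e * k / (1 + e) - real (k - m) * ln (1 + e))"
    using e by (simp add: exp_diff exp_of_nat_mult)
  also have "\<dots> \<le> exp (2 * ln e)" using exponent by simp
  also have "\<dots> = e^2" using e by (simp only: mult_2 exp_add exp_ln power2_eq_square)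
  finally show ?thesis .
qed

lemma root_power_eq: "0 \<le> x \<Longrightarrow> 0 < m \<Longrightarrow> (x ^ m) powr (1 / real m) = (x :: real)"
  by (simp add: powr_inverse_root real_root_power_cancel)

lemma power_one_minus_le_div_power_one_plus:
  fixes \<epsilon> D :: real
  assumes "0 < \<epsilon>" "\<epsilon> < 1" "0 < m" "0 \<le> D"
  shows "(1 - \<epsilon>) ^ m * D \<le> (1 - \<epsilon>\<^sup>2) * (D / (1 + \<epsilon>) ^ m)"
proof -
  have "(1 - \<epsilon>) ^ m * D = (1 - \<epsilon>\<^sup>2) ^ m * (D / (1 + \<epsilon>) ^ m)"
    using assms by (simp add: power2_eq_square field_simps power_mult_distrib[symmetric])
  also have "\<dots> \<le> (1 - \<epsilon>\<^sup>2) * (D / (1 + \<epsilon>) ^ m)"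
    using assms power_decreasing[of 1 m "1 - \<epsilon>\<^sup>2"]
    by (intro mult_right_mono) (auto simp: power2_eq_square mult_le_one)
  finally show ?thesis .
qed

section \<open>Independent sampling and conditioning\<close>

lemma set_pmf_indep_sample: "set_pmf (indep_sample n p) \<subseteq> Pow {1..n}"
proof -
  have "set_pmf (Pi_pmf {1..n} False (\<lambda>i. bernoulli_pmf (p i))) \<subseteq> {f. \<forall>x. x \<notin> {1..n} \<longrightarrow> f x = False}"
    by (rule set_Pi_pmf_subset) simp
  thus ?thesis unfolding indep_sample_def by (auto simp del: atLeastAtMost_iff)
qed

lemma finite_set_pmf_indep_sample: "finite (set_pmf (indep_sample n p))"
  using set_pmf_indep_sample by (rule finite_subset) simp

lemma empty_in_set_pmf_indep_sample:
  assumes "\<forall>i\<in>{1..n}. 0 \<le> p i \<and> p i < 1"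
  shows "{} \<in> set_pmf (indep_sample n p)"
proof -
  let ?Pi = "Pi_pmf {1..n} False (\<lambda>i. bernoulli_pmf (p i))"
  have "pmf ?Pi (\<lambda>_. False) = (\<Prod>i\<in>{1..n}. pmf (bernoulli_pmf (p i)) False)"
    by (rule pmf_Pi') auto
  also have "\<dots> = (\<Prod>i\<in>{1..n}. 1 - p i)"
    by (intro prod.cong refl pmf_bernoulli_False) (use assms less_imp_le in blast)+
  also have "\<dots> > 0" by (rule prod_pos) (use assms in auto)
  finally have "(\<lambda>_. False) \<in> set_pmf ?Pi" by (simp add: set_pmf_iff)
  thus ?thesis unfolding indep_sample_def by force
qed

lemma expectation_indep_sample_superset:
  fixes p :: "nat \<Rightarrow> real" and c :: real
  assumes T: "T \<subseteq> {1..n}" and p: "\<forall>i\<in>{1..n}. 0 \<le> p i \<and> p i \<le> 1" and "0 \<le> c"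
  shows "measure_pmf.expectation (indep_sample n p) (\<lambda>S. if T \<subseteq> S then c ^ card (S - T) else 0)
    = (\<Prod>i\<in>T. p i) * (\<Prod>i\<in>{1..n} - T. c * p i + (1 - p i))"
proof -
  let ?N = "{1..n}"
  let ?Pi = "Pi_pmf ?N False (\<lambda>i. bernoulli_pmf (p i))"
  define v where "v i b = (if i \<in> T then of_bool b else if b then c else 1)" for i b
  have product_form: "(if T \<subseteq> {i. f i} then c ^ card ({i. f i} - T) else 0) = (\<Prod>i\<in>?N. v i (f i))"
    if "f \<in> set_pmf ?Pi" for f
  proof -
    have outside: "\<And>x. x \<notin> ?N \<Longrightarrow> \<not> f x" using set_Pi_pmf_subset[of ?N False] that by auto
    have "(\<Prod>i\<in>T. v i (f i)) = (\<Prod>i\<in>T. of_bool (f i))"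
      by (rule prod.cong) (auto simp: v_def)
    also have "\<dots> = of_bool (T \<subseteq> {i. f i})"
      using finite_subset[OF T] by (auto simp: prod_zero_iff intro!: prod.neutral)
    moreover have "(\<Prod>i\<in>?N - T. v i (f i)) = (\<Prod>i\<in>{i\<in>?N - T. f i}. c)"
      by (subst prod.inter_filter) (auto simp: v_def intro: prod.cong)
    moreover have "{i\<in>?N - T. f i} = {i. f i} - T" using outside by auto
    ultimately show ?thesis using prod.subset_diff[OF T, of "\<lambda>i. v i (f i)"] by auto
  qed
  have "measure_pmf.expectation (indep_sample n p) (\<lambda>S. if T \<subseteq> S then c ^ card (S - T) else 0)
      = measure_pmf.expectation ?Pi (\<lambda>f. \<Prod>i\<in>?N. v i (f i))"
    unfolding indep_sample_def by (simp, intro integral_cong_AE AE_pmfI) (auto simp: product_form)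
  also have "\<dots> = (\<Prod>i\<in>?N. measure_pmf.expectation (bernoulli_pmf (p i)) (v i))"
    by (rule expectation_prod_Pi_pmf) (auto simp: integrable_measure_pmf_finite v_def \<open>0 \<le> c\<close>)
  also have "\<dots> = (\<Prod>i\<in>?N. v i True * p i + v i False * (1 - p i))"
    by (rule prod.cong) (use p in auto)
  also have "\<dots> = (\<Prod>i\<in>?N - T. v i True * p i + v i False * (1 - p i))
      * (\<Prod>i\<in>T. v i True * p i + v i False * (1 - p i))"
    by (rule prod.subset_diff[OF T]) simp
  also have "\<dots> = (\<Prod>i\<in>?N - T. c * p i + (1 - p i)) * (\<Prod>i\<in>T. p i)"
    by (intro arg_cong2[where f="(*)"] prod.cong) (auto simp: v_def)
  finally show ?thesis by simp
qed

lemma expectation_cond_pmf_ge: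
  fixes f :: "'a \<Rightarrow> real"
  assumes "set_pmf P \<inter> A \<noteq> {}" "finite (set_pmf P)"
    and "\<And>x. x \<in> set_pmf P \<Longrightarrow> x \<in> A \<Longrightarrow> 0 \<le> f x"
  shows "measure_pmf.expectation P (\<lambda>x. if x \<in> A then f x else 0)
    \<le> measure_pmf.expectation (cond_pmf P A) f"
proof -
  have "0 < measure_pmf.prob P A" using assms(1) by (auto intro: measure_pmf_posI)
  hence pmf_le: "pmf P x \<le> pmf (cond_pmf P A) x" if "x \<in> A" for x
    using that assms(1) by (simp add: pmf_cond divide_simps mult_left_le measure_pmf.prob_le_1)
  have pointwise: "(if x \<in> A then f x else 0) * pmf P x \<le> f x * pmf (cond_pmf P A) x"
    if "x \<in> set_pmf P" for x
  proof (cases "x \<in> A")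
    case True
    thus ?thesis using pmf_le[OF True] assms(3)[OF that True] by (simp add: mult_left_mono)
  next
    case False
    thus ?thesis by (simp add: pmf_cond[OF assms(1)])
  qed
  have "measure_pmf.expectation P (\<lambda>x. if x \<in> A then f x else 0)
      = (\<Sum>x\<in>set_pmf P. (if x \<in> A then f x else 0) * pmf P x)"
    by (rule integral_measure_pmf_real) (use assms in auto)
  also have "\<dots> \<le> (\<Sum>x\<in>set_pmf P. f x * pmf (cond_pmf P A) x)"
    by (intro sum_mono pointwise)
  also have "\<dots> = measure_pmf.expectation (cond_pmf P A) f"
    by (rule integral_measure_pmf_real[symmetric]) (use assms in auto)
  finally show ?thesis .
qed

section \<open>Truncation to samples of size at most \<open>k\<close>\<close>

text \<open>For \<open>c \<ge> 1\<close> this is a lower bound for the indicator of \<open>T \<subseteq> S \<and> card S \<le> card T + d\<close>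
  whose expectation under independent sampling factorizes, \<open>c ^ card (S - T)\<close> being a product
  over the elements outside \<open>T\<close>.\<close>

definition truncation_weight :: "real \<Rightarrow> nat \<Rightarrow> nat set \<Rightarrow> nat set \<Rightarrow> real" where
  "truncation_weight c d T S = (if T \<subseteq> S then 1 - c ^ card (S - T) / c ^ d else 0)"

lemma truncation_weight_le_indicator:
  assumes "1 \<le> c" "finite S" "card T \<le> k"
  shows "truncation_weight c (k - card T) T S \<le> of_bool (T \<subseteq> S \<and> card S \<le> k)"
proof (cases "T \<subseteq> S \<and> k < card S")
  case True
  hence "card (S - T) = card S - card T"
    using assms(2) by (meson card_Diff_subset finite_subset)
  hence "k - card T \<le> card (S - T)" using True by (simp add: diff_le_mono)
  hence "c ^ (k - card T) \<le> c ^ card (S - T)" using assms(1) by (rule power_increasing)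
  thus ?thesis using True assms(1) by (simp add: truncation_weight_def)
next
  case False
  thus ?thesis using assms(1) by (auto simp: truncation_weight_def)
qed

lemma expectation_truncation_weight:
  assumes "T \<subseteq> {1..n}" "\<forall>i\<in>{1..n}. 0 \<le> p i \<and> p i \<le> 1" "0 \<le> c"
  shows "measure_pmf.expectation (indep_sample n p) (truncation_weight c d T)
    = (\<Prod>i\<in>T. p i) * (1 - (\<Prod>i\<in>{1..n} - T. c * p i + (1 - p i)) / c ^ d)"
proof -
  let ?E = "measure_pmf.expectation (indep_sample n p)"
  have "truncation_weight c d T = (\<lambda>S. (if T \<subseteq> S then 1 ^ card (S - T) else 0)
      - (if T \<subseteq> S then c ^ card (S - T) else 0) / c ^ d)"
    by (auto simp: truncation_weight_def fun_eq_iff)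
  hence "?E (truncation_weight c d T) = ?E (\<lambda>S. if T \<subseteq> S then 1 ^ card (S - T) else 0)
      - ?E (\<lambda>S. if T \<subseteq> S then c ^ card (S - T) else 0) / c ^ d"
    by (simp add: integrable_measure_pmf_finite finite_set_pmf_indep_sample)
  thus ?thesis
    using expectation_indep_sample_superset[OF assms(1,2)] assms(3) by (simp add: algebra_simps)
qed

lemma expectation_truncation_weight_ge:
  assumes e: "0 < \<epsilon>" "\<epsilon> < 1" and "m \<le> k"
    and k_large: "real k \<ge> 4 * real m / \<epsilon> + 12 / \<epsilon>\<^sup>2 * ln (1 / \<epsilon>)"
    and T: "T \<subseteq> {1..n}" "card T = m"
    and p: "\<forall>i\<in>{1..n}. 0 \<le> p i \<and> p i \<le> 1"
    and sum_p: "(\<Sum>i\<in>{1..n}. p i) = real k / (1 + \<epsilon>)"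
  shows "(1 - \<epsilon>\<^sup>2) * (\<Prod>i\<in>T. p i)
    \<le> measure_pmf.expectation (indep_sample n p) (truncation_weight (1 + \<epsilon>) (k - m) T)"
proof -
  let ?R = "(\<Prod>i\<in>{1..n} - T. (1 + \<epsilon>) * p i + (1 - p i))"
  have "?R \<le> (\<Prod>i\<in>{1..n} - T. exp (\<epsilon> * p i))"
  proof (rule prod_mono)
    fix i assume "i \<in> {1..n} - T"
    hence "0 \<le> \<epsilon> * p i" using p e by simp
    thus "0 \<le> (1 + \<epsilon>) * p i + (1 - p i) \<and> (1 + \<epsilon>) * p i + (1 - p i) \<le> exp (\<epsilon> * p i)"
      using exp_ge_add_one_self[of "\<epsilon> * p i"] by (simp add: algebra_simps)
  qed
  also have "\<dots> = exp (\<Sum>i\<in>{1..n} - T. \<epsilon> * p i)" by (simp add: exp_sum)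
  also have "\<dots> \<le> exp (\<Sum>i\<in>{1..n}. \<epsilon> * p i)"
    using p e by (simp, intro sum_mono2) auto
  also have "\<dots> = exp (\<epsilon> * k / (1 + \<epsilon>))" using sum_p by (simp add: sum_distrib_left[symmetric])
  finally have "?R / (1 + \<epsilon>) ^ (k - m) \<le> \<epsilon>\<^sup>2"
    using exp_div_one_plus_power_le_sq[OF e \<open>m \<le> k\<close> k_large] e
    by (meson divide_right_mono order_trans zero_le_power add_nonneg_nonneg zero_le_one less_imp_le)
  moreover have "0 \<le> (\<Prod>i\<in>T. p i)" using T p by (intro prod_nonneg) auto
  ultimately have "(1 - \<epsilon>\<^sup>2) * (\<Prod>i\<in>T. p i) \<le> (\<Prod>i\<in>T. p i) * (1 - ?R / (1 + \<epsilon>) ^ (k - m))"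
    by (metis diff_left_mono mult.commute mult_left_mono)
  thus ?thesis
    using e by (simp add: expectation_truncation_weight[OF T(1) p])
qed

lemma det_gram_truncated_ge:
  fixes a :: "nat \<Rightarrow> real^'m::finite"
  assumes "finite N" "S \<subseteq> N" "1 \<le> c" "CARD('m) \<le> k"
  shows "(\<Sum>T | T \<subseteq> N \<and> card T = CARD('m). det (gram a T) * truncation_weight c (k - CARD('m)) T S)
    \<le> (if card S \<le> k then det (gram a S) else 0)"
proof -
  have fin_S: "finite S" using assms(2,1) by (rule finite_subset)
  have "(\<Sum>T | T \<subseteq> N \<and> card T = CARD('m). det (gram a T) * truncation_weight c (k - CARD('m)) T S)
      \<le> (\<Sum>T | T \<subseteq> N \<and> card T = CARD('m). det (gram a T) * of_bool (T \<subseteq> S \<and> card S \<le> k))"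
  proof (intro sum_mono mult_left_mono)
    fix T assume T: "T \<in> {T. T \<subseteq> N \<and> card T = CARD('m)}"
    thus "truncation_weight c (k - CARD('m)) T S \<le> of_bool (T \<subseteq> S \<and> card S \<le> k)"
      using truncation_weight_le_indicator[OF assms(3) fin_S, of T k] assms(4) by simp
    show "0 \<le> det (gram a T)" using T assms(1) by (auto intro: det_gram_nonneg finite_subset)
  qed
  also have "\<dots> = (if card S \<le> k then det (gram a S) else 0)"
  proof -
    have "{T. T \<subseteq> N \<and> card T = CARD('m)} \<inter> {T. T \<subseteq> S} = {T. T \<subseteq> S \<and> card T = CARD('m)}"
      using assms(2) by auto
    thus ?thesis
      using assms(1) by (simp add: det_gram_cauchy_binet[OF fin_S] sum.inter_filter[symmetric])
  qed
  finally show ?thesis .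
qed

lemma expectation_det_rejection_sample_ge:
  fixes a :: "nat \<Rightarrow> real^'m::finite"
  assumes e: "0 < \<epsilon>" "\<epsilon> < 1" and mk: "CARD('m) \<le> k"
    and k_large: "real k \<ge> 4 * real CARD('m) / \<epsilon> + 12 / \<epsilon>\<^sup>2 * ln (1 / \<epsilon>)"
    and p: "\<forall>i\<in>{1..n}. 0 \<le> p i \<and> p i < 1"
    and sum_p: "(\<Sum>i\<in>{1..n}. p i) = real k / (1 + \<epsilon>)"
  shows "(1 - \<epsilon>\<^sup>2) * det (\<Sum>i\<in>{1..n}. p i *\<^sub>R outer (a i))
    \<le> measure_pmf.expectation (rejection_sample n k p) (\<lambda>S. det (gram a S))"
proof -
  let ?P = "indep_sample n p" and ?Tm = "{T. T \<subseteq> {1..n} \<and> card T = CARD('m)}"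
  let ?w = "truncation_weight (1 + \<epsilon>) (k - CARD('m))"
  have p_le_1: "\<forall>i\<in>{1..n}. 0 \<le> p i \<and> p i \<le> 1" using p by auto
  have int: "integrable ?P f" for f :: "nat set \<Rightarrow> real"
    by (simp add: integrable_measure_pmf_finite finite_set_pmf_indep_sample)
  have "(1 - \<epsilon>\<^sup>2) * det (\<Sum>i\<in>{1..n}. p i *\<^sub>R outer (a i))
      = (\<Sum>T\<in>?Tm. det (gram a T) * ((1 - \<epsilon>\<^sup>2) * (\<Prod>i\<in>T. p i)))"
    by (simp add: det_weighted_gram_cauchy_binet sum_distrib_left mult_ac)
  also have "\<dots> \<le> (\<Sum>T\<in>?Tm. det (gram a T) * measure_pmf.expectation ?P (?w T))"
    by (intro sum_mono mult_left_mono expectation_truncation_weight_ge[OF e mk k_large _ _ p_le_1 sum_p]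
        det_gram_nonneg) (auto intro: finite_subset)
  also have "\<dots> = measure_pmf.expectation ?P (\<lambda>S. \<Sum>T\<in>?Tm. det (gram a T) * ?w T S)"
    by (simp add: int)
  also have "\<dots> \<le> measure_pmf.expectation ?P (\<lambda>S. if card S \<le> k then det (gram a S) else 0)"
    using set_pmf_indep_sample e(1)
    by (intro integral_mono_AE int AE_pmfI det_gram_truncated_ge[OF _ _ _ mk]) auto
  also have "\<dots> \<le> measure_pmf.expectation (rejection_sample n k p) (\<lambda>S. det (gram a S))"
  proof -
    have "set_pmf ?P \<inter> {S. card S \<le> k} \<noteq> {}" using empty_in_set_pmf_indep_sample[OF p] by auto
    moreover have "0 \<le> det (gram a S)" if "S \<in> set_pmf ?P" for S
      using that set_pmf_indep_sample[of n p] by (auto intro: det_gram_nonneg finite_subset)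
    ultimately show ?thesis
      unfolding rejection_sample_def
      using expectation_cond_pmf_ge[of ?P "{S. card S \<le> k}" "\<lambda>S. det (gram a S)"]
      by (simp add: finite_set_pmf_indep_sample)
  qed
  finally show ?thesis .
qed

section \<open>The algorithm and the relaxation\<close>

lemma greedy_complete_extends:
  assumes greedy: "greedy_rule a n k sel" and "S \<subseteq> {1..n}" "card S \<le> k"
  shows "S \<subseteq> greedy_complete sel k S" "greedy_complete sel k S \<subseteq> {1..n}"
    "card (greedy_complete sel k S) = k"
proof -
  let ?step = "\<lambda>T. insert (sel T) T"
  have "S \<subseteq> (?step ^^ j) S \<and> (?step ^^ j) S \<subseteq> {1..n} \<and> card ((?step ^^ j) S) = card S + j"
    if "j \<le> k - card S" for j
    using that
  proof (induction j)
    case 0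
    thus ?case using \<open>S \<subseteq> {1..n}\<close> by simp
  next
    case (Suc j)
    let ?T = "(?step ^^ j) S"
    have IH: "S \<subseteq> ?T" "?T \<subseteq> {1..n}" "card ?T = card S + j" using Suc by auto
    hence "sel ?T \<in> {1..n} - ?T"
      using greedy Suc.prems unfolding greedy_rule_def by auto
    moreover have "finite ?T" using IH(2) by (rule finite_subset) simp
    ultimately show ?case using IH by auto
  qed
  from this[of "k - card S"] \<open>card S \<le> k\<close>
  show "S \<subseteq> greedy_complete sel k S" "greedy_complete sel k S \<subseteq> {1..n}"
    "card (greedy_complete sel k S) = k"
    unfolding greedy_complete_def by auto
qed

lemma set_pmf_rejection_sample:
  assumes "\<forall>i\<in>{1..n}. 0 \<le> p i \<and> p i < 1" "S \<in> set_pmf (rejection_sample n k p)"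
  shows "S \<subseteq> {1..n}" "card S \<le> k"
proof -
  have "set_pmf (rejection_sample n k p) = set_pmf (indep_sample n p) \<inter> {S. card S \<le> k}"
    unfolding rejection_sample_def using empty_in_set_pmf_indep_sample[OF assms(1)]
    by (intro set_cond_pmf) auto
  thus "S \<subseteq> {1..n}" "card S \<le> k" using assms(2) set_pmf_indep_sample[of n p] by auto
qed

lemma expectation_det_greedy_complete_ge:
  fixes a :: "nat \<Rightarrow> real^'m::finite"
  assumes "greedy_rule a n k sel" "\<forall>i\<in>{1..n}. 0 \<le> p i \<and> p i < 1"
  shows "measure_pmf.expectation (rejection_sample n k p) (\<lambda>S. det (gram a S))
    \<le> measure_pmf.expectation (map_pmf (greedy_complete sel k) (rejection_sample n k p))
        (\<lambda>S. det (gram a S))"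
proof -
  let ?Q = "rejection_sample n k p"
  have support: "S \<subseteq> {1..n}" "card S \<le> k" if "S \<in> set_pmf ?Q" for S
    using set_pmf_rejection_sample[OF assms(2) that] by auto
  have "finite (set_pmf ?Q)" by (rule finite_subset[of _ "Pow {1..n}"]) (use support in auto)
  moreover have "det (gram a S) \<le> det (gram a (greedy_complete sel k S))" if "S \<in> set_pmf ?Q" for S
    using greedy_complete_extends[OF assms(1) support[OF that]]
    by (intro det_gram_mono) (auto intro: finite_subset)
  ultimately show ?thesis
    by (simp, intro integral_mono_AE AE_pmfI integrable_measure_pmf_finite) auto
qed

lemma sampling_probabilities:
  assumes "relax_feasible a n k x w" "0 < \<epsilon>"
  shows "\<forall>i\<in>{1..n}. 0 \<le> x i / (1 + \<epsilon>) \<and> x i / (1 + \<epsilon>) < 1"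
    "(\<Sum>i\<in>{1..n}. x i / (1 + \<epsilon>)) = real k / (1 + \<epsilon>)"
proof -
  show "\<forall>i\<in>{1..n}. 0 \<le> x i / (1 + \<epsilon>) \<and> x i / (1 + \<epsilon>) < 1"
    using assms by (force simp: relax_feasible_def field_simps)
  show "(\<Sum>i\<in>{1..n}. x i / (1 + \<epsilon>)) = real k / (1 + \<epsilon>)"
    using assms by (simp add: relax_feasible_def sum_divide_distrib[symmetric])
qed

lemma set_pmf_algorithm_output:
  assumes "greedy_rule a n k sel" "relax_feasible a n k x w" "0 < \<epsilon>"
    and "S \<in> set_pmf (algorithm_output n k \<epsilon> x sel)"
  shows "S \<subseteq> {1..n} \<and> card S = k"
proof -
  obtain S0 where "S0 \<in> set_pmf (rejection_sample n k (\<lambda>i. x i / (1 + \<epsilon>)))" "S = greedy_complete sel k S0"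
    using assms(4) by (auto simp: algorithm_output_def)
  thus ?thesis
    using greedy_complete_extends[OF assms(1) set_pmf_rejection_sample[OF sampling_probabilities(1)[OF assms(2,3)]]]
    by auto
qed

lemma expectation_det_algorithm_output_ge:
  fixes a :: "nat \<Rightarrow> real^'m::finite"
  assumes e: "0 < \<epsilon>" "\<epsilon> < 1" and mk: "CARD('m) \<le> k"
    and k_large: "real k \<ge> 4 * real CARD('m) / \<epsilon> + 12 / \<epsilon>\<^sup>2 * ln (1 / \<epsilon>)"
    and feasible: "relax_feasible a n k x w" and greedy: "greedy_rule a n k sel"
  shows "(1 - \<epsilon>) ^ CARD('m) * det (\<Sum>i\<in>{1..n}. x i *\<^sub>R outer (a i))
    \<le> measure_pmf.expectation (algorithm_output n k \<epsilon> x sel) (\<lambda>S. det (gram a S))"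
proof -
  let ?p = "\<lambda>i. x i / (1 + \<epsilon>)" and ?D = "det (\<Sum>i\<in>{1..n}. x i *\<^sub>R outer (a i))"
  have "0 \<le> ?D"
    using feasible unfolding relax_feasible_def by (intro det_weighted_gram_nonneg) auto
  hence "(1 - \<epsilon>) ^ CARD('m) * ?D \<le> (1 - \<epsilon>\<^sup>2) * (?D / (1 + \<epsilon>) ^ CARD('m))"
    using power_one_minus_le_div_power_one_plus[OF e] by simp
  also have "\<dots> = (1 - \<epsilon>\<^sup>2) * det (\<Sum>i\<in>{1..n}. ?p i *\<^sub>R outer (a i))"
    by (simp add: det_weighted_gram_divide)
  also have "\<dots> \<le> measure_pmf.expectation (rejection_sample n k ?p) (\<lambda>S. det (gram a S))"
    using sampling_probabilities[OF feasible e(1)] by (intro expectation_det_rejection_sample_ge[OF e mk k_large])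
  also have "\<dots> \<le> measure_pmf.expectation (algorithm_output n k \<epsilon> x sel) (\<lambda>S. det (gram a S))"
    unfolding algorithm_output_def
    using sampling_probabilities(1)[OF feasible e(1)] by (rule expectation_det_greedy_complete_ge[OF greedy])
  finally show ?thesis .
qed

lemma wstar_attained:
  assumes "k \<le> n"
  obtains S where "S \<subseteq> {1..n}" "card S = k" "wstar a n k = dobj a S"
proof -
  let ?W = "{dobj a S | S. S \<subseteq> {1..n} \<and> card S = k}"
  have "finite ?W" by (rule finite_subset[of _ "dobj a ` Pow {1..n}"]) auto
  moreover have "?W \<noteq> {}" using assms by (auto intro!: exI[of _ "{1..k}"])
  ultimately have "wstar a n k \<in> ?W" unfolding wstar_def by (rule Max_in)
  thus ?thesis using that by blast
qed

lemma relax_feasible_indicator: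
  assumes "S \<subseteq> {1..n}" "card S = k"
  shows "relax_feasible a n k (\<lambda>i. of_bool (i \<in> S)) (dobj a S)"
proof -
  have "(\<Sum>i\<in>{1..n}. of_bool (i \<in> S) *\<^sub>R outer (a i)) = gram a S"
    unfolding gram_def using assms(1) by (intro sum.mono_neutral_cong_right) auto
  moreover have "(\<Sum>i\<in>{1..n}. of_bool (i \<in> S) :: real) = real k"
    using assms by (simp add: Int_absorb1)
  ultimately show ?thesis by (simp add: relax_feasible_def dobj_def)
qed

lemma wstar_le_relax_optimal:
  assumes "relax_optimal a n k x w" "k \<le> n"
  shows "wstar a n k \<le> w"
  using wstar_attained[OF assms(2)] relax_feasible_indicator assms(1)
  by (metis relax_optimal_def)

theorem theorem3:
  fixes a :: "nat \<Rightarrow> real^'m" and n k :: nat and \<epsilon> :: real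
    and xh :: "nat \<Rightarrow> real" and wh :: real and sel :: "nat set \<Rightarrow> nat"
  assumes "CARD('m) \<le> k" and "k \<le> n"
    and "0 < \<epsilon>" and "\<epsilon> < 1"
    and "real k \<ge> 4 * real CARD('m) / \<epsilon> + 12 / \<epsilon>\<^sup>2 * ln (1 / \<epsilon>)"
    and "relax_optimal a n k xh wh"
    and "greedy_rule a n k sel"
  shows "(\<forall>S\<in>set_pmf (algorithm_output n k \<epsilon> xh sel). S \<subseteq> {1..n} \<and> card S = k) \<and>
    (measure_pmf.expectation (algorithm_output n k \<epsilon> xh sel) (\<lambda>S. det (gram a S)))
        powr (1 / real CARD('m)) \<ge> (1 - \<epsilon>) * wstar a n k"
proof -
  let ?m = "CARD('m)"
  define D where "D = det (\<Sum>i\<in>{1..n}. xh i *\<^sub>R outer (a i))"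
  define E where "E = measure_pmf.expectation (algorithm_output n k \<epsilon> xh sel) (\<lambda>S. det (gram a S))"
  have feasible: "relax_feasible a n k xh wh" using assms(6) by (simp add: relax_optimal_def)
  hence "0 \<le> D" unfolding D_def relax_feasible_def by (intro det_weighted_gram_nonneg) auto
  have "(1 - \<epsilon>) * wstar a n k \<le> (1 - \<epsilon>) * D powr (1 / ?m)"
    using wstar_le_relax_optimal[OF assms(6,2)] feasible assms(4)
    by (intro mult_left_mono) (auto simp: relax_feasible_def D_def)
  also have "\<dots> = ((1 - \<epsilon>) ^ ?m * D) powr (1 / ?m)"
    using assms(4) \<open>0 \<le> D\<close> by (simp add: powr_mult root_power_eq)
  also have "\<dots> \<le> E powr (1 / ?m)"
    using expectation_det_algorithm_output_ge[OF assms(3,4,1,5) feasible assms(7)] assms(4) \<open>0 \<le> D\<close>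
    by (intro powr_mono2) (auto simp: D_def E_def)
  finally show ?thesis
    using set_pmf_algorithm_output[OF assms(7) feasible assms(3)] by (auto simp: E_def)
qed

end
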